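(* Let $k\in[n-1]$, $w\in S_n^{k\searrow}$ and $k'\le k$ with $k'\in[n-1]$. If $u\in S_n$ satisfies $u\le_{k'}w$, then $u\in S_n^{k\searrow}$.
   Context: Permutations in one-line notation; for $i<j$, $wt_{i,j}$ is $w$ with positions $i,j$ swapped; $\ell$ is the number of inversions. $u\lessdot w$ iff $w=ut_{i,j}$ for some $i<j$ and $\ell(w)=\ell(u)+1$; $u\lessdot_{k'}w$ iff moreover $i\le k'<j$; $\le_{k'}$ is the $k'$-Bruhat order, the reflexive-transitive closure of $\lessdot_{k'}$. For $k\in\{0,\dots,n-1\}$, $S_n^{k\searrow}=\{v\in S_n: v(k+1)>v(k+2)>\dots>v(n)\}$. *)

theory Defs
  imports "HOL-Combinatorics.Permutations"
begin

definition swap_pos :: "(nat \<Rightarrow> nat) \<Rightarrow> nat \<Rightarrow> nat \<Rightarrow> (nat \<Rightarrow> nat)" where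
  "swap_pos w i j = w \<circ> Transposition.transpose i j"

definition inv_count :: "nat \<Rightarrow> (nat \<Rightarrow> nat) \<Rightarrow> nat" where
  "inv_count n w = card {(i, j). 1 \<le> i \<and> i < j \<and> j \<le> n \<and> w i > w j}"

definition kcover :: "nat \<Rightarrow> nat \<Rightarrow> (nat \<Rightarrow> nat) \<Rightarrow> (nat \<Rightarrow> nat) \<Rightarrow> bool" where
  "kcover n k u w \<longleftrightarrow> u permutes {1..n} \<and>
     (\<exists>i j. 1 \<le> i \<and> i \<le> k \<and> k < j \<and> j \<le> n \<and> w = swap_pos u i j
        \<and> inv_count n w = inv_count n u + 1)"

definition kbruhat_le :: "nat \<Rightarrow> nat \<Rightarrow> (nat \<Rightarrow> nat) \<Rightarrow> (nat \<Rightarrow> nat) \<Rightarrow> bool" where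
  "kbruhat_le n k = (kcover n k)\<^sup>*\<^sup>*"

definition desc_tail :: "nat \<Rightarrow> nat \<Rightarrow> (nat \<Rightarrow> nat) set" where
  "desc_tail n k = {v. v permutes {1..n} \<and> (\<forall>i j. k + 1 \<le> i \<and> i < j \<and> j \<le> n \<longrightarrow> v i > v j)}"

end

theory Submission
  imports Defs
begin

text \<open>Write \<open>v = u t\<^sub>i\<^sub>j\<close> with \<open>i \<le> k' \<le> k < j\<close>. A Bruhat cover raises the length by exactly one,
  which forces \<open>u(i) < u(j)\<close> and forbids any position \<open>a\<close> strictly between \<open>i\<close> and \<open>j\<close> with
  \<open>u(i) < u(a) < u(j)\<close>: each such \<open>a\<close> would contribute two further inversions. Now let \<open>v\<close> be
  decreasing after position \<open>k\<close>. As \<open>i \<le> k\<close>, the tail of \<open>u\<close> differs from that of \<open>v\<close> only at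
  position \<open>j\<close>, where \<open>v(j) = u(i)\<close> is replaced by the larger \<open>u(j)\<close>. This keeps every pair
  \<open>(j, q)\<close> decreasing, and a pair \<open>(p, j)\<close> with \<open>k < p < j\<close> can only fail if \<open>u(i) < u(p) < u(j)\<close>,
  which the cover condition excludes.\<close>

lemma swap_pos_apply_first [simp]: "swap_pos u i j i = u j"
  and swap_pos_apply_second [simp]: "swap_pos u i j j = u i"
  and swap_pos_apply_other [simp]: "x \<noteq> i \<Longrightarrow> x \<noteq> j \<Longrightarrow> swap_pos u i j x = u x"
  by (simp_all add: swap_pos_def)

lemma swap_pos_involutory [simp]: "swap_pos (swap_pos u i j) i j = u"
  by (simp add: swap_pos_def comp_assoc)

definition inversions :: "nat \<Rightarrow> (nat \<Rightarrow> nat) \<Rightarrow> (nat \<times> nat) set" where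
  "inversions n w = {(i, j). 1 \<le> i \<and> i < j \<and> j \<le> n \<and> w i > w j}"

lemma inv_count_eq_card_inversions: "inv_count n w = card (inversions n w)"
  by (simp add: inv_count_def inversions_def)

lemma finite_inversions [simp]: "finite (inversions n w)"
  by (rule finite_subset[of _ "{1..n} \<times> {1..n}"]) (auto simp: inversions_def)

text \<open>The inversions of \<open>u\<close> in row \<open>i\<close> up to column \<open>j\<close> and in column \<open>j\<close> from row \<open>i\<close> on stay
  inversions of \<open>u t\<^sub>i\<^sub>j\<close>; all others are moved by \<open>t\<^sub>i\<^sub>j\<close>. The new inversions \<open>(i, j)\<close>, \<open>(i, a)\<close>
  and \<open>(a, j)\<close> for the middle values \<open>a\<close> are missed by this injection.\<close>

lemma inv_count_swap_pos_ge:
  assumes ij: "1 \<le> i" "i < j" "j \<le> n" and uij: "u i < u j"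
  defines "M \<equiv> {a. i < a \<and> a < j \<and> u i < u a \<and> u a < u j}"
  shows "inv_count n u + 1 + 2 * card M \<le> inv_count n (swap_pos u i j)"
proof -
  let ?t = "Transposition.transpose i j"
  let ?v = "swap_pos u i j"
  have v: "?v x = u (?t x)" for x by (simp add: swap_pos_def)
  define fixed where "fixed = (\<lambda>(p::nat, q::nat). (p = i \<and> q \<le> j) \<or> (q = j \<and> i \<le> p))"
  define h where "h = (\<lambda>(p, q). if fixed (p, q) then (p, q) else (?t p, ?t q))"
  define E where "E = insert (i, j) ((\<lambda>a. (i, a)) ` M \<union> (\<lambda>a. (a, j)) ` M)"
  have h_maps: "h ` inversions n u \<subseteq> inversions n ?v"
    using ij uij
    by (auto simp: h_def fixed_def inversions_def v Transposition.transpose_def split: if_splits)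
  have h_inj: "inj_on h (inversions n u)"
    using ij uij by (intro inj_onI) (auto simp: h_def fixed_def inversions_def Transposition.transpose_def split: if_splits)
  have E_new: "E \<subseteq> inversions n ?v"
    using ij uij by (auto simp: E_def M_def inversions_def v Transposition.transpose_def)
  have E_disjoint: "E \<inter> h ` inversions n u = {}"
    using ij uij
    by (auto simp: E_def M_def h_def fixed_def inversions_def Transposition.transpose_def split: if_splits)
  have "finite M" by (rule finite_subset[of _ "{i<..<j}"]) (auto simp: M_def)
  moreover have "(i, j) \<notin> (\<lambda>a. (i, a)) ` M \<union> (\<lambda>a. (a, j)) ` M"
    and "(\<lambda>a. (i, a)) ` M \<inter> (\<lambda>a. (a, j)) ` M = {}"
    by (auto simp: M_def)
  ultimately have card_E: "card E = 1 + 2 * card M"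
    by (simp add: E_def card_Un_disjoint card_image inj_on_def)
  have "inv_count n u + 1 + 2 * card M = card (h ` inversions n u) + card E"
    by (simp add: card_E card_image[OF h_inj] inv_count_eq_card_inversions)
  also have "\<dots> = card (h ` inversions n u \<union> E)"
    using E_disjoint E_new by (subst card_Un_disjoint) (auto intro: finite_subset)
  also have "\<dots> \<le> inv_count n ?v"
    unfolding inv_count_eq_card_inversions using h_maps E_new by (intro card_mono) auto
  finally show ?thesis .
qed

lemma swap_pos_cover_conditions:
  assumes u: "u permutes {1..n}" and ij: "1 \<le> i" "i < j" "j \<le> n"
    and len: "inv_count n (swap_pos u i j) = inv_count n u + 1"
  shows "u i < u j" and "\<not> (i < a \<and> a < j \<and> u i < u a \<and> u a < u j)"
proof -
  show uij: "u i < u j"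
  proof (rule ccontr)
    assume "\<not> u i < u j"
    moreover have "u i \<noteq> u j"
      using permutes_inj[OF u] ij by (metis injD less_irrefl)
    ultimately have "swap_pos u i j i < swap_pos u i j j" by simp
    from inv_count_swap_pos_ge[OF ij this] len show False by simp
  qed
  have "card {a. i < a \<and> a < j \<and> u i < u a \<and> u a < u j} = 0"
    using inv_count_swap_pos_ge[OF ij uij] len by simp
  moreover have "finite {a. i < a \<and> a < j \<and> u i < u a \<and> u a < u j}"
    by (rule finite_subset[of _ "{i<..<j}"]) auto
  ultimately show "\<not> (i < a \<and> a < j \<and> u i < u a \<and> u a < u j)" by auto
qed

lemma kcover_desc_tail:
  assumes "k' \<le> k" and "kcover n k' u v" and "v \<in> desc_tail n k"
  shows "u \<in> desc_tail n k"
proof -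
  obtain i j where ij: "1 \<le> i" "i \<le> k'" "k' < j" "j \<le> n" and v: "v = swap_pos u i j"
    and len: "inv_count n v = inv_count n u + 1" and u: "u permutes {1..n}"
    using assms(2) by (auto simp: kcover_def)
  note cover = swap_pos_cover_conditions[OF u ij(1) _ ij(4) len[unfolded v]]
  have v_desc: "v q < v p" if "k + 1 \<le> p" "p < q" "q \<le> n" for p q
    using assms(3) that by (simp add: desc_tail_def)
  have "u q < u p" if pq: "k + 1 \<le> p" "p < q" "q \<le> n" for p q
  proof -
    have "p \<noteq> i" "q \<noteq> i" "i < j" using pq ij assms(1) by auto
    consider "p = j" | "q = j" | "p \<noteq> j" "q \<noteq> j" using pq by blast
    then show ?thesis
    proof cases
      case 1
      then show ?thesis
        using v_desc[OF pq] cover(1)[OF \<open>i < j\<close>] \<open>q \<noteq> i\<close> pq by (simp add: v)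
    next
      case 2
      then have "u i < u p"
        using v_desc[OF pq] \<open>p \<noteq> i\<close> pq by (simp add: v)
      moreover have "u p \<noteq> u j"
        using permutes_inj[OF u] pq 2 by (metis injD less_irrefl)
      moreover have "i < p"
        using pq ij assms(1) by simp
      ultimately show ?thesis
        using cover(2)[OF \<open>i < j\<close>, of p] pq 2 by auto
    next
      case 3
      then show ?thesis
        using v_desc[OF pq] \<open>p \<noteq> i\<close> \<open>q \<noteq> i\<close> by (simp add: v)
    qed
  qed
  with u show ?thesis by (simp add: desc_tail_def)
qed

theorem lemma3p7:
  fixes n k k' :: nat and u w :: "nat \<Rightarrow> nat"
  assumes "k \<in> {1..n-1}" and "w \<in> desc_tail n k"
    and "k' \<in> {1..n-1}" and "k' \<le> k"
    and "u permutes {1..n}" and "kbruhat_le n k' u w"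
  shows "u \<in> desc_tail n k"
  using assms(6) unfolding kbruhat_le_def
proof (induction rule: converse_rtranclp_induct)
  case base
  from assms(2) show ?case .
next
  case (step y z)
  with kcover_desc_tail[OF assms(4)] show ?case by blast
qed

end
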